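(* Let $f:\mathbb{N}\to\mathbb{N}$ satisfy $f(n)/n\to0$, and let $T$ be a locally finite, perfect tree with fixed root $r$. Then the compatibility graph $C_{T,r}$ is $\mathcal{Z}_f^+$-Ramsey: for every finite coloring of the edges of $K_\mathbb{N}$ there is a monochromatic copy of $C_{T,r}$ whose vertex set $V$ does not satisfy $|V\cap\{1,\dots,n\}|/f(n)\to0$.
   Context: $\mathbb{N}=\{1,2,\dots\}$, $K_\mathbb{N}$ the complete graph on $\mathbb{N}$; a copy is a subgraph isomorphic to the given graph, monochromatic if all its edges have the same color. $\mathcal{Z}_f$ is the ideal of sets $A\subseteq\mathbb{N}$ with $|A\cap\{1,\dots,n\}|/f(n)\to0$, and $\mathcal{Z}_f^+$ is its complement in $\mathcal{P}(\mathbb{N})$. For a tree $T$ with root $r$, $v$ is an extension of $u$ if $u$ lies on the unique path from $r$ to $v$; $u,v$ are compatible if one is an extension of the other. $T$ is perfect if every vertex has two extensions that are incompatible with each other. The compatibility graph $C_{T,r}$ has vertex set $V(T)$ and an edge between every pair of distinct compatible vertices. *)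

theory Defs
  imports Complex_Main
begin

definition is_path :: "'a set \<Rightarrow> ('a \<Rightarrow> 'a \<Rightarrow> bool) \<Rightarrow> 'a list \<Rightarrow> bool" where
  "is_path V E p \<longleftrightarrow> p \<noteq> [] \<and> set p \<subseteq> V \<and> distinct p \<and>
     (\<forall>i. Suc i < length p \<longrightarrow> E (p ! i) (p ! Suc i))"

definition is_tree :: "'a set \<Rightarrow> ('a \<Rightarrow> 'a \<Rightarrow> bool) \<Rightarrow> bool" where
  "is_tree V E \<longleftrightarrow> V \<noteq> {} \<and>
     (\<forall>u v. E u v \<longrightarrow> u \<in> V \<and> v \<in> V \<and> u \<noteq> v \<and> E v u) \<and>
     (\<forall>u\<in>V. \<forall>v\<in>V. \<exists>!p. is_path V E p \<and> hd p = u \<and> last p = v)"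

definition locally_finite :: "'a set \<Rightarrow> ('a \<Rightarrow> 'a \<Rightarrow> bool) \<Rightarrow> bool" where
  "locally_finite V E \<longleftrightarrow> (\<forall>v\<in>V. finite {w. E v w})"

definition tree_path :: "'a set \<Rightarrow> ('a \<Rightarrow> 'a \<Rightarrow> bool) \<Rightarrow> 'a \<Rightarrow> 'a \<Rightarrow> 'a list" where
  "tree_path V E u v = (THE p. is_path V E p \<and> hd p = u \<and> last p = v)"

definition extension :: "'a set \<Rightarrow> ('a \<Rightarrow> 'a \<Rightarrow> bool) \<Rightarrow> 'a \<Rightarrow> 'a \<Rightarrow> 'a \<Rightarrow> bool" where
  "extension V E r u v \<longleftrightarrow> u \<in> V \<and> v \<in> V \<and> u \<in> set (tree_path V E r v)"

definition compatible :: "'a set \<Rightarrow> ('a \<Rightarrow> 'a \<Rightarrow> bool) \<Rightarrow> 'a \<Rightarrow> 'a \<Rightarrow> 'a \<Rightarrow> bool" where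
  "compatible V E r u v \<longleftrightarrow> extension V E r u v \<or> extension V E r v u"

definition perfect_tree :: "'a set \<Rightarrow> ('a \<Rightarrow> 'a \<Rightarrow> bool) \<Rightarrow> 'a \<Rightarrow> bool" where
  "perfect_tree V E r \<longleftrightarrow> (\<forall>v\<in>V. \<exists>a b. extension V E r v a \<and> extension V E r v b \<and>
       \<not> compatible V E r a b)"

definition compat_graph_edge :: "'a set \<Rightarrow> ('a \<Rightarrow> 'a \<Rightarrow> bool) \<Rightarrow> 'a \<Rightarrow> 'a \<Rightarrow> 'a \<Rightarrow> bool" where
  "compat_graph_edge V E r u v \<longleftrightarrow> u \<in> V \<and> v \<in> V \<and> u \<noteq> v \<and> compatible V E r u v"

definition Z_ideal :: "(nat \<Rightarrow> nat) \<Rightarrow> nat set set" where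
  "Z_ideal f = {A. (\<lambda>n. real (card (A \<inter> {1..n})) / real (f n)) \<longlonglongrightarrow> 0}"

definition KN_edges :: "nat set set" where
  "KN_edges = {{x, y} | x y. 1 \<le> x \<and> 1 \<le> y \<and> x \<noteq> y}"

end

theory Submission
  imports Defs "HOL-Library.Countable_Set" "HOL-Real_Asymp.Real_Asymp"
begin

text \<open>A maximal family of sets of positive upper density that is closed under intersections is an
  ultrafilter \<open>M\<close>. For a finite colouring, some colour \<open>i\<close> makes the set of \<open>x\<close> whose
  \<open>i\<close>-neighbourhood lies in \<open>M\<close> itself a member of \<open>M\<close>. Inside members of \<open>M\<close> one chooses
  recursively a vertex \<open>a\<^sub>k\<close> and a finite block \<open>B\<^sub>k\<close> of its \<open>i\<close>-neighbourhood with at least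
  \<open>f n\<^sub>k\<close> elements below some \<open>n\<^sub>k \<ge> k\<close> (possible because \<open>f n / n \<rightarrow> 0\<close>), and passes to the
  common \<open>i\<close>-neighbourhood of \<open>a\<^sub>k\<close> and \<open>B\<^sub>k\<close>. The \<open>a\<^sub>k\<close> then form an \<open>i\<close>-clique that is joined
  in colour \<open>i\<close> to \<open>B = \<Union>B\<^sub>k\<close>, and \<open>B \<notin> Z_ideal f\<close>.

  A perfect tree contains an infinite antichain \<open>Q\<close>. Sending \<open>Q\<close> onto \<open>B\<close> and the rest of the
  (countable) tree injectively onto clique vertices embeds \<open>C\<^sub>T\<^sub>,\<^sub>r\<close> monochromatically, since no
  edge of \<open>C\<^sub>T\<^sub>,\<^sub>r\<close> has both ends in \<open>Q\<close>.\<close>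

definition pos_upper_density :: "nat set \<Rightarrow> bool" where
  "pos_upper_density S \<longleftrightarrow>
     (\<exists>d>0. \<exists>\<^sub>F n in sequentially. d * real n \<le> real (card (S \<inter> {1..n})))"

lemma pos_upper_density_mono:
  assumes "pos_upper_density S" "S \<subseteq> T"
  shows "pos_upper_density T"
proof -
  obtain d where "d > 0"
    and freq: "\<exists>\<^sub>F n in sequentially. d * real n \<le> real (card (S \<inter> {1..n}))"
    using assms(1) unfolding pos_upper_density_def by blast
  have "real (card (S \<inter> {1..n})) \<le> real (card (T \<inter> {1..n}))" for n
    using assms(2) by (intro of_nat_mono card_mono) auto
  then have "d * real n \<le> real (card (T \<inter> {1..n}))"
    if "d * real n \<le> real (card (S \<inter> {1..n}))" for n
    using that order_trans by blast
  then have "\<exists>\<^sub>F n in sequentially. d * real n \<le> real (card (T \<inter> {1..n}))"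
    by (rule frequently_elim1[OF freq])
  then show ?thesis
    using \<open>d > 0\<close> unfolding pos_upper_density_def by blast
qed

lemma pos_upper_density_Un:
  assumes "pos_upper_density (S \<union> T)"
  shows "pos_upper_density S \<or> pos_upper_density T"
proof -
  obtain d where "d > 0"
    and freq: "\<exists>\<^sub>F n in sequentially. d * real n \<le> real (card ((S \<union> T) \<inter> {1..n}))"
    using assms unfolding pos_upper_density_def by blast
  have card_Un: "real (card ((S \<union> T) \<inter> {1..n})) \<le> real (card (S \<inter> {1..n})) + real (card (T \<inter> {1..n}))"
    for n by (metis Int_Un_distrib2 card_Un_le of_nat_add of_nat_mono)
  have "d/2 * real n \<le> real (card (S \<inter> {1..n})) \<or> d/2 * real n \<le> real (card (T \<inter> {1..n}))"
    if "d * real n \<le> real (card ((S \<union> T) \<inter> {1..n}))" for n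
    using that card_Un[of n] by linarith
  then have "\<exists>\<^sub>F n in sequentially. d/2 * real n \<le> real (card (S \<inter> {1..n})) \<or>
                                    d/2 * real n \<le> real (card (T \<inter> {1..n}))"
    by (rule frequently_elim1[OF freq])
  then show ?thesis
    unfolding frequently_disj_iff pos_upper_density_def using \<open>d > 0\<close> half_gt_zero by blast
qed

lemma pos_upper_density_UNIV: "pos_upper_density UNIV"
  unfolding pos_upper_density_def frequently_sequentially by (intro exI[of _ 1]) auto

lemma finite_not_pos_upper_density:
  assumes "finite S"
  shows "\<not> pos_upper_density S"
proof
  assume "pos_upper_density S"
  then obtain d where "d > 0"
    and freq: "\<exists>\<^sub>F n in sequentially. d * real n \<le> real (card (S \<inter> {1..n}))"
    unfolding pos_upper_density_def by blast
  have card_le: "real (card (S \<inter> {1..n})) \<le> real (card S)" for n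
    using assms by (intro of_nat_mono card_mono) auto
  have "\<forall>\<^sub>F n in sequentially. real (card S) < d * real n"
    using \<open>d > 0\<close> by real_asymp
  then have "\<forall>\<^sub>F n in sequentially. \<not> d * real n \<le> real (card (S \<inter> {1..n}))"
    by (rule eventually_mono) (use card_le in \<open>smt (verit)\<close>)
  with freq show False
    by (simp add: frequently_def)
qed

definition dense_family :: "nat set set \<Rightarrow> bool" where
  "dense_family F \<longleftrightarrow> (\<forall>S\<in>F. \<forall>T\<in>F. S \<inter> T \<in> F) \<and> (\<forall>S\<in>F. pos_upper_density S)"

lemma exists_maximal_dense_family:
  "\<exists>M. dense_family M \<and> (\<forall>F. dense_family F \<longrightarrow> M \<subseteq> F \<longrightarrow> F = M)"
proof -
  have "\<exists>M\<in>Collect dense_family. \<forall>F\<in>Collect dense_family. M \<subseteq> F \<longrightarrow> F = M"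
  proof (rule subset_Zorn')
    fix C assume "subset.chain (Collect dense_family) C"
    then have dense: "\<And>F. F \<in> C \<Longrightarrow> dense_family F"
      and chain: "\<forall>F\<in>C. \<forall>G\<in>C. F \<subseteq> G \<or> G \<subseteq> F"
      by (auto simp: subset_chain_def)
    have "S \<inter> T \<in> \<Union>C" if "S \<in> F" "F \<in> C" "T \<in> G" "G \<in> C" for S T F G
      using chain that dense[of F] dense[of G] unfolding dense_family_def
      by (metis UnionI subsetD)
    then show "\<Union>C \<in> Collect dense_family"
      using dense unfolding dense_family_def by blast
  qed
  then show ?thesis by auto
qed

locale dense_ultrafilter =
  fixes M :: "nat set set"
  assumes family: "dense_family M"
    and maximal: "\<And>F. dense_family F \<Longrightarrow> M \<subseteq> F \<Longrightarrow> F = M"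
begin

lemma mem_Int: "S \<in> M \<Longrightarrow> T \<in> M \<Longrightarrow> S \<inter> T \<in> M"
  using family unfolding dense_family_def by blast

lemma mem_pos_upper_density: "S \<in> M \<Longrightarrow> pos_upper_density S"
  using family unfolding dense_family_def by blast

lemma mem_nonempty: "S \<in> M \<Longrightarrow> S \<noteq> {}"
  using mem_pos_upper_density finite_not_pos_upper_density by blast

lemma UNIV_mem: "UNIV \<in> M"
proof -
  have "dense_family (insert UNIV M)"
    using family pos_upper_density_UNIV unfolding dense_family_def by auto
  then show ?thesis
    using maximal by blast
qed

lemma mem_if_dense_traces:
  assumes "\<forall>S\<in>M. pos_upper_density (S \<inter> X)"
  shows "X \<in> M"
proof -
  let ?F = "{T. \<exists>S\<in>M. S \<inter> X \<subseteq> T}"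
  have "dense_family ?F"
    unfolding dense_family_def
  proof (intro conjI ballI)
    fix T1 T2 assume "T1 \<in> ?F" "T2 \<in> ?F"
    then obtain S1 S2 where "S1 \<in> M" "S2 \<in> M" "S1 \<inter> X \<subseteq> T1" "S2 \<inter> X \<subseteq> T2"
      by blast
    then show "T1 \<inter> T2 \<in> ?F"
      using mem_Int by blast
  next
    fix T assume "T \<in> ?F"
    then show "pos_upper_density T"
      using assms pos_upper_density_mono by blast
  qed
  moreover have "M \<subseteq> ?F"
    by blast
  ultimately have "?F = M"
    by (rule maximal)
  then show ?thesis
    using UNIV_mem by blast
qed

lemma mem_superset: "S \<in> M \<Longrightarrow> S \<subseteq> T \<Longrightarrow> T \<in> M"
  using mem_if_dense_traces mem_Int mem_pos_upper_density pos_upper_density_mono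
  by (metis Int_mono order_refl)

lemma mem_or_Compl_mem: "X \<in> M \<or> - X \<in> M"
proof (rule ccontr)
  assume "\<not> (X \<in> M \<or> - X \<in> M)"
  then obtain S T where "S \<in> M" "\<not> pos_upper_density (S \<inter> X)"
    and "T \<in> M" "\<not> pos_upper_density (T \<inter> - X)"
    using mem_if_dense_traces by blast
  moreover have "S \<inter> T \<subseteq> (S \<inter> X) \<union> (T \<inter> - X)"
    by blast
  ultimately show False
    using mem_Int mem_pos_upper_density pos_upper_density_mono pos_upper_density_Un by blast
qed

lemma mem_if_finite_Compl: "finite (- X) \<Longrightarrow> X \<in> M"
  using mem_or_Compl_mem mem_pos_upper_density finite_not_pos_upper_density by blast

lemma mem_INT:
  assumes "finite J" "\<forall>j\<in>J. X j \<in> M"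
  shows "(\<Inter>j\<in>J. X j) \<in> M"
  using assms by (induction J rule: finite_induct) (auto simp: UNIV_mem mem_Int)

lemma mem_UN_imp_mem:
  assumes "finite J" "(\<Union>j\<in>J. X j) \<in> M"
  shows "\<exists>j\<in>J. X j \<in> M"
  using assms
proof (induction J rule: finite_induct)
  case empty
  then show ?case using mem_nonempty by auto
next
  case (insert j J)
  show ?case
  proof (cases "X j \<in> M")
    case False
    then have "(\<Union>j\<in>insert j J. X j) \<inter> - X j \<in> M"
      using insert.prems mem_Int mem_or_Compl_mem by blast
    then have "(\<Union>j\<in>J. X j) \<in> M"
      by (rule mem_superset) blast
    then show ?thesis
      using insert.IH by blast
  qed blast
qed

end

lemma pos_upper_density_large_initial_segment:
  assumes "pos_upper_density R" and f: "(\<lambda>n. real (f n) / real n) \<longlonglongrightarrow> 0"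
  shows "\<exists>n\<ge>k. f n \<le> card (R \<inter> {1..n}) \<and> k \<le> card (R \<inter> {1..n})"
proof -
  obtain d where "d > 0"
    and freq: "\<exists>\<^sub>F n in sequentially. d * real n \<le> real (card (R \<inter> {1..n}))"
    using assms(1) unfolding pos_upper_density_def by blast
  have "\<forall>\<^sub>F n in sequentially. real (f n) / real n < d"
    using order_tendstoD(2)[OF f] \<open>d > 0\<close> by blast
  moreover have "\<forall>\<^sub>F n in sequentially. real k \<le> d * real n"
    using \<open>d > 0\<close> by real_asymp
  moreover have "\<forall>\<^sub>F n in sequentially. k \<le> n \<and> 0 < n"
    by (metis eventually_ge_at_top eventually_gt_at_top eventually_conj)
  ultimately have "\<forall>\<^sub>F n in sequentially. real (f n) \<le> d * real n \<and> real k \<le> d * real n \<and> k \<le> n"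
    by eventually_elim (auto simp: divide_less_eq)
  then obtain n where "d * real n \<le> real (card (R \<inter> {1..n}))"
    and "real (f n) \<le> d * real n" "real k \<le> d * real n" "k \<le> n"
    using frequently_eventually_frequently[OF freq] by (auto dest: frequently_ex)
  then show ?thesis
    by (intro exI[of _ n]) auto
qed

definition colour_nbhd :: "(nat set \<Rightarrow> 'b) \<Rightarrow> 'b \<Rightarrow> nat \<Rightarrow> nat set" where
  "colour_nbhd c i x = {y. 1 \<le> y \<and> y \<noteq> x \<and> c {x, y} = i}"

context dense_ultrafilter
begin

lemma exists_popular_colour:
  assumes "finite (c ` KN_edges)"
  shows "\<exists>i. {x. 1 \<le> x \<and> colour_nbhd c i x \<in> M} \<in> M"
proof -
  have "\<exists>i\<in>c ` KN_edges. colour_nbhd c i x \<in> M" if "1 \<le> x" for x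
  proof (rule mem_UN_imp_mem[OF assms])
    have "finite (- {y. 1 \<le> y \<and> y \<noteq> x})"
      by (rule finite_subset[of _ "{0, x}"]) auto
    moreover have "{y. 1 \<le> y \<and> y \<noteq> x} \<subseteq> (\<Union>i\<in>c ` KN_edges. colour_nbhd c i x)"
      using that unfolding KN_edges_def colour_nbhd_def by blast
    ultimately show "(\<Union>i\<in>c ` KN_edges. colour_nbhd c i x) \<in> M"
      using mem_if_finite_Compl mem_superset by blast
  qed
  then have "{x. 1 \<le> x} \<subseteq> (\<Union>i\<in>c ` KN_edges. {x. 1 \<le> x \<and> colour_nbhd c i x \<in> M})"
    by blast
  moreover have "{x::nat. 1 \<le> x} \<in> M"
    by (rule mem_if_finite_Compl, rule finite_subset[of _ "{0}"]) auto
  ultimately show ?thesis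
    using mem_UN_imp_mem[OF assms] mem_superset by blast
qed

lemma clique_join_step:
  assumes f: "(\<lambda>n. real (f n) / real n) \<longlonglongrightarrow> 0"
    and R: "R \<in> M" "\<forall>x\<in>R. colour_nbhd c i x \<in> M"
  shows "\<exists>a Bk R'. a \<in> R \<and> Bk \<subseteq> R \<inter> colour_nbhd c i a \<and> k \<le> card Bk \<and>
           (\<exists>n\<ge>k. f n \<le> card (Bk \<inter> {1..n})) \<and>
           R' \<in> M \<and> R' \<subseteq> R \<inter> colour_nbhd c i a \<inter> (\<Inter>y\<in>Bk. colour_nbhd c i y)"
proof -
  obtain a where a: "a \<in> R"
    using mem_nonempty[OF R(1)] by blast
  define R1 where "R1 = R \<inter> colour_nbhd c i a"
  have "R1 \<in> M"
    unfolding R1_def using R a by (blast intro: mem_Int)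
  then obtain n where n: "k \<le> n" "f n \<le> card (R1 \<inter> {1..n})" "k \<le> card (R1 \<inter> {1..n})"
    using pos_upper_density_large_initial_segment[OF mem_pos_upper_density f] by blast
  define Bk where "Bk = R1 \<inter> {1..n}"
  have "R1 \<inter> (\<Inter>y\<in>Bk. colour_nbhd c i y) \<in> M"
    using \<open>R1 \<in> M\<close> R(2) by (intro mem_Int mem_INT) (auto simp: Bk_def R1_def)
  then show ?thesis
    using a n by (intro exI[of _ a] exI[of _ Bk] exI[of _ "R1 \<inter> (\<Inter>y\<in>Bk. colour_nbhd c i y)"])
      (auto simp: Bk_def R1_def)
qed

lemma exists_clique_joined_to_set:
  assumes f: "(\<lambda>n. real (f n) / real n) \<longlonglongrightarrow> 0"
    and A: "A \<in> M" "A \<subseteq> {x. colour_nbhd c i x \<in> M}"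
  obtains a :: "nat \<Rightarrow> nat" and B where
    "\<And>k l. k < l \<Longrightarrow> a l \<in> colour_nbhd c i (a k)"
    "\<And>k x. x \<in> B \<Longrightarrow> x \<in> colour_nbhd c i (a k) \<or> a k \<in> colour_nbhd c i x"
    "range a \<subseteq> A" "B \<subseteq> A" "infinite B" "\<forall>N. \<exists>n\<ge>N. f n \<le> card (B \<inter> {1..n})"
proof -
  define step where "step k R a Bk R' \<longleftrightarrow>
    a \<in> R \<and> Bk \<subseteq> R \<inter> colour_nbhd c i a \<and> k \<le> card Bk \<and> (\<exists>n\<ge>k. f n \<le> card (Bk \<inter> {1..n})) \<and>
    R' \<subseteq> R \<inter> colour_nbhd c i a \<inter> (\<Inter>y\<in>Bk. colour_nbhd c i y)"
    for k R a Bk R'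
  have "\<exists>Rs. \<forall>k. (Rs k \<in> M \<and> Rs k \<subseteq> A) \<and> (\<exists>a Bk. step k (Rs k) a Bk (Rs (Suc k)))"
  proof (rule dependent_nat_choice)
    show "\<exists>R. R \<in> M \<and> R \<subseteq> A"
      using A by blast
  next
    fix R k assume R: "R \<in> M \<and> R \<subseteq> A"
    then have "\<forall>x\<in>R. colour_nbhd c i x \<in> M"
      using A(2) by blast
    then obtain a Bk R' where "step k R a Bk R'" "R' \<in> M"
      using clique_join_step[OF f conjunct1[OF R], where k = k] unfolding step_def by meson
    moreover have "R' \<subseteq> A"
      using R \<open>step k R a Bk R'\<close> unfolding step_def by blast
    ultimately show "\<exists>R'. (R' \<in> M \<and> R' \<subseteq> A) \<and> (\<exists>a Bk. step k R a Bk R')"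
      by blast
  qed
  then obtain Rs where Rs: "\<And>k. Rs k \<subseteq> A"
    and steps: "\<forall>k. \<exists>a Bk. step k (Rs k) a Bk (Rs (Suc k))"
    by blast
  obtain a Bk where step: "\<And>k. step k (Rs k) (a k) (Bk k) (Rs (Suc k))"
    using steps unfolding choice_iff by blast
  have a_mem: "a k \<in> Rs k"
    and Bk_sub: "Bk k \<subseteq> Rs k \<inter> colour_nbhd c i (a k)"
    and card_Bk: "k \<le> card (Bk k)"
    and Bk_large: "\<exists>n\<ge>k. f n \<le> card (Bk k \<inter> {1..n})"
    and Rs_Suc: "Rs (Suc k) \<subseteq> Rs k \<inter> colour_nbhd c i (a k) \<inter> (\<Inter>y\<in>Bk k. colour_nbhd c i y)"
    for k
    using step[of k] unfolding step_def by simp_all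
  have later: "x \<in> colour_nbhd c i (a k) \<inter> (\<Inter>y\<in>Bk k. colour_nbhd c i y)"
    if "x \<in> Rs l" "k < l" for x k l
  proof -
    have "Rs (Suc n) \<subseteq> Rs n" for n
      using Rs_Suc[of n] by blast
    then have "Rs l \<subseteq> Rs (Suc k)"
      using lift_Suc_antimono_le[of Rs "Suc k" l] \<open>k < l\<close> by simp
    then show ?thesis
      using Rs_Suc[of k] that(1) by blast
  qed
  show ?thesis
  proof
    show "a l \<in> colour_nbhd c i (a k)" if "k < l" for k l
      using later[OF a_mem that] by blast
    show "x \<in> colour_nbhd c i (a k) \<or> a k \<in> colour_nbhd c i x" if "x \<in> (\<Union>l. Bk l)" for k x
    proof -
      from that obtain l where x: "x \<in> Bk l"
        by blast
      consider "k < l" | "k = l" | "l < k"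
        by linarith
      then show ?thesis
      proof cases
        case 1
        then show ?thesis using later[of x l k] Bk_sub[of l] x by blast
      next
        case 2
        then show ?thesis using Bk_sub[of l] x by blast
      next
        case 3
        then show ?thesis using later[OF a_mem, of l k] x by blast
      qed
    qed
    show "range a \<subseteq> A"
      using Rs a_mem by blast
    show "(\<Union>l. Bk l) \<subseteq> A"
      using Rs Bk_sub by blast
    show "infinite (\<Union>l. Bk l)"
    proof
      assume fin: "finite (\<Union>l. Bk l)"
      then have "card (Bk (Suc (card (\<Union>l. Bk l)))) \<le> card (\<Union>l. Bk l)"
        by (intro card_mono) auto
      then show False
        using card_Bk[of "Suc (card (\<Union>l. Bk l))"] by linarith
    qed
    show "\<forall>N. \<exists>n\<ge>N. f n \<le> card ((\<Union>l. Bk l) \<inter> {1..n})"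
    proof
      fix N
      obtain n where "n \<ge> N" "f n \<le> card (Bk N \<inter> {1..n})"
        using Bk_large by blast
      moreover have "card (Bk N \<inter> {1..n}) \<le> card ((\<Union>l. Bk l) \<inter> {1..n})"
        by (intro card_mono) auto
      ultimately show "\<exists>n\<ge>N. f n \<le> card ((\<Union>l. Bk l) \<inter> {1..n})"
        using order_trans by blast
    qed
  qed
qed

end

lemma not_in_Z_ideal_if_frequently_large:
  assumes f: "\<forall>n\<ge>1. f n \<ge> 1" and large: "\<forall>N. \<exists>n\<ge>N. f n \<le> card (B \<inter> {1..n})"
  shows "B \<notin> Z_ideal f"
proof
  assume "B \<in> Z_ideal f"
  then have lim: "(\<lambda>n. real (card (B \<inter> {1..n})) / real (f n)) \<longlonglongrightarrow> 0"
    unfolding Z_ideal_def by simp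
  obtain N where N: "\<And>n. n \<ge> N \<Longrightarrow> real (card (B \<inter> {1..n})) / real (f n) < 1"
    using order_tendstoD(2)[OF lim, of 1] unfolding eventually_sequentially by auto
  obtain n where "n \<ge> Suc N" "f n \<le> card (B \<inter> {1..n})"
    using large by blast
  moreover have "f n \<ge> 1"
    using f \<open>n \<ge> Suc N\<close> by simp
  ultimately have "real (card (B \<inter> {1..n})) / real (f n) \<ge> 1"
    by simp
  then show False
    using N[of n] \<open>n \<ge> Suc N\<close> by simp
qed

lemma Z_ideal_subset:
  assumes "S \<subseteq> T" "T \<in> Z_ideal f"
  shows "S \<in> Z_ideal f"
proof -
  have lim: "(\<lambda>n. real (card (T \<inter> {1..n})) / real (f n)) \<longlonglongrightarrow> 0"
    using assms(2) unfolding Z_ideal_def by simp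
  have "real (card (S \<inter> {1..n})) / real (f n) \<le> real (card (T \<inter> {1..n})) / real (f n)" for n
    using assms(1) by (intro divide_right_mono of_nat_mono card_mono) auto
  then have "(\<lambda>n. real (card (S \<inter> {1..n})) / real (f n)) \<longlonglongrightarrow> 0"
    by (intro real_tendsto_sandwich[OF _ _ tendsto_const lim]) (simp_all add: always_eventually)
  then show ?thesis
    unfolding Z_ideal_def by simp
qed

lemma exists_monochromatic_clique_join:
  fixes c :: "nat set \<Rightarrow> 'b" and f :: "nat \<Rightarrow> nat"
  assumes "finite (c ` KN_edges)" "\<forall>n\<ge>1. f n \<ge> 1" "(\<lambda>n. real (f n) / real n) \<longlonglongrightarrow> 0"
  obtains i and a :: "nat \<Rightarrow> nat" and B where
    "inj a" "range a \<subseteq> {1..}" "infinite B" "B \<subseteq> {1..}" "range a \<inter> B = {}"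
    "\<And>k l. k \<noteq> l \<Longrightarrow> c {a k, a l} = i" "\<And>k x. x \<in> B \<Longrightarrow> c {a k, x} = i"
    "B \<notin> Z_ideal f"
proof -
  obtain M where "dense_ultrafilter M"
    using exists_maximal_dense_family unfolding dense_ultrafilter_def by blast
  then interpret dense_ultrafilter M .
  obtain i where popular: "{x. 1 \<le> x \<and> colour_nbhd c i x \<in> M} \<in> M"
    using exists_popular_colour[OF assms(1)] by blast
  obtain a :: "nat \<Rightarrow> nat" and B where
    clique: "\<And>k l. k < l \<Longrightarrow> a l \<in> colour_nbhd c i (a k)"
    and join: "\<And>k x. x \<in> B \<Longrightarrow> x \<in> colour_nbhd c i (a k) \<or> a k \<in> colour_nbhd c i x"
    and "range a \<subseteq> {x. 1 \<le> x \<and> colour_nbhd c i x \<in> M}"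
    and "B \<subseteq> {x. 1 \<le> x \<and> colour_nbhd c i x \<in> M}" "infinite B"
    and large: "\<forall>N. \<exists>n\<ge>N. f n \<le> card (B \<inter> {1..n})"
    by (rule exists_clique_joined_to_set[OF assms(3) popular]) (auto intro: that)
  have clique': "a k \<noteq> a l \<and> c {a k, a l} = i" if "k \<noteq> l" for k l
    using clique[of k l] clique[of l k] that unfolding colour_nbhd_def
    by (cases "k < l") (auto simp: insert_commute)
  have join': "1 \<le> x \<and> a k \<noteq> x \<and> c {a k, x} = i" if "x \<in> B" for k x
    using join[OF that, of k] \<open>B \<subseteq> _\<close> that unfolding colour_nbhd_def
    by (auto simp: insert_commute)
  show ?thesis
  proof
    show "inj a"
      using clique' by (meson injI)
    show "range a \<subseteq> {1..}" "infinite B"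
      using \<open>range a \<subseteq> _\<close> \<open>infinite B\<close> by auto
    show "B \<subseteq> {1..}" "range a \<inter> B = {}" "\<And>k x. x \<in> B \<Longrightarrow> c {a k, x} = i"
      using join' by auto
    show "\<And>k l. k \<noteq> l \<Longrightarrow> c {a k, a l} = i"
      using clique' by blast
    show "B \<notin> Z_ideal f"
      using not_in_Z_ideal_if_frequently_large[OF assms(2) large] .
  qed
qed

lemma is_path_take:
  assumes "is_path V E p" "0 < j"
  shows "is_path V E (take j p)"
  using assms set_take_subset[of j p] unfolding is_path_def by (auto simp: take_eq_Nil)

lemma finite_ends_of_short_paths:
  assumes "locally_finite V E"
  shows "finite {last p | p. is_path V E p \<and> hd p = r \<and> length p \<le> Suc n}"
proof (induction n)
  case 0
  have "{last p | p. is_path V E p \<and> hd p = r \<and> length p \<le> Suc 0} \<subseteq> {r}"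
    unfolding is_path_def by (auto simp: le_Suc_eq length_Suc_conv)
  then show ?case
    by (rule finite_subset) simp
next
  case (Suc n)
  let ?D = "\<lambda>n. {last p | p. is_path V E p \<and> hd p = r \<and> length p \<le> Suc n}"
  have "?D (Suc n) \<subseteq> ?D n \<union> (\<Union>u\<in>?D n \<inter> V. {w. E u w})"
  proof
    fix v assume "v \<in> ?D (Suc n)"
    then obtain p where p: "is_path V E p" "hd p = r" "last p = v" "length p \<le> Suc (Suc n)"
      by blast
    show "v \<in> ?D n \<union> (\<Union>u\<in>?D n \<inter> V. {w. E u w})"
    proof (cases "length p \<le> Suc n")
      case True
      then show ?thesis using p by blast
    next
      case False
      then have len: "length p = Suc (Suc n)"
        using p(4) by simp
      have "is_path V E (take (Suc n) p)"
        using is_path_take[OF p(1)] by simp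
      moreover have "hd (take (Suc n) p) = r"
        using p(2) by simp
      moreover have "last (take (Suc n) p) = p ! n"
        using len by (subst last_conv_nth) auto
      ultimately have "p ! n \<in> ?D n"
        by (metis (mono_tags, lifting) length_take min_le_iff_disj mem_Collect_eq order_refl)
      moreover have "p ! n \<in> V" "E (p ! n) v"
        using p(1,3) len unfolding is_path_def by (auto simp: last_conv_nth)
      ultimately show ?thesis
        by blast
    qed
  qed
  moreover have "finite (\<Union>u\<in>?D n \<inter> V. {w. E u w})"
    using Suc.IH assms unfolding locally_finite_def by blast
  ultimately show ?case
    using Suc.IH by (meson finite_UnI finite_subset)
qed

locale rooted_tree =
  fixes V :: "'a set" and E :: "'a \<Rightarrow> 'a \<Rightarrow> bool" and r :: 'a
  assumes tree: "is_tree V E" and root: "r \<in> V"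
begin

lemma tree_path:
  assumes "v \<in> V"
  shows "is_path V E (tree_path V E r v) \<and> hd (tree_path V E r v) = r \<and> last (tree_path V E r v) = v"
proof -
  have "\<exists>!p. is_path V E p \<and> hd p = r \<and> last p = v"
    using tree root assms unfolding is_tree_def by blast
  then show ?thesis
    unfolding tree_path_def by (rule theI')
qed

lemma tree_path_unique:
  assumes "is_path V E p" "hd p = r" "last p = v"
  shows "tree_path V E r v = p"
proof -
  have "v \<in> V"
    using assms unfolding is_path_def by (metis last_in_set subsetD)
  then have "\<exists>!p. is_path V E p \<and> hd p = r \<and> last p = v"
    using tree root unfolding is_tree_def by blast
  then show ?thesis
    unfolding tree_path_def using assms by (intro the1_equality) auto
qed

lemma tree_path_take:
  assumes "v \<in> V" "j < length (tree_path V E r v)"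
  shows "tree_path V E r (tree_path V E r v ! j) = take (Suc j) (tree_path V E r v)"
proof -
  have "last (take (Suc j) (tree_path V E r v)) = tree_path V E r v ! j"
    using assms(2) by (subst last_conv_nth) auto
  then show ?thesis
    using tree_path[OF assms(1)] by (intro tree_path_unique is_path_take) auto
qed

lemma extension_refl: "v \<in> V \<Longrightarrow> extension V E r v v"
  unfolding extension_def using tree_path unfolding is_path_def by (metis last_in_set)

lemma extension_trans:
  assumes "extension V E r u v" "extension V E r v w"
  shows "extension V E r u w"
proof -
  obtain j where j: "j < length (tree_path V E r w)" "tree_path V E r w ! j = v"
    using assms(2) unfolding extension_def by (meson in_set_conv_nth)
  then have "tree_path V E r v = take (Suc j) (tree_path V E r w)"
    using tree_path_take assms(2) unfolding extension_def by metis
  then show ?thesis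
    using assms set_take_subset unfolding extension_def by (metis subsetD)
qed

lemma common_extension_imp_compatible:
  assumes "extension V E r a w" "extension V E r b w"
  shows "compatible V E r a b"
proof -
  obtain i j where i: "i < length (tree_path V E r w)" "tree_path V E r w ! i = a"
    and j: "j < length (tree_path V E r w)" "tree_path V E r w ! j = b"
    using assms unfolding extension_def by (meson in_set_conv_nth)
  have w: "w \<in> V"
    using assms(1) unfolding extension_def by blast
  have earlier: "tree_path V E r w ! i \<in> set (tree_path V E r (tree_path V E r w ! j))"
    if "i \<le> j" "j < length (tree_path V E r w)" for i j
    unfolding tree_path_take[OF w that(2)] using that
    by (auto simp: in_set_conv_nth intro!: exI[of _ i])
  show ?thesis
    using earlier[of i j] earlier[of j i] assms i j
    unfolding compatible_def extension_def by (metis nat_le_linear)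
qed

lemma incompatible_extension:
  assumes "\<not> compatible V E r a b" "extension V E r b b'"
  shows "\<not> compatible V E r a b'"
  using assms common_extension_imp_compatible extension_trans
  unfolding compatible_def by blast

lemma countable_vertices:
  assumes "locally_finite V E"
  shows "countable V"
proof -
  have "v \<in> {last p | p. is_path V E p \<and> hd p = r \<and> length p \<le> Suc (length (tree_path V E r v))}"
    if "v \<in> V" for v
    using tree_path[OF that] by (intro CollectI exI[of _ "tree_path V E r v"]) auto
  then have "V \<subseteq> (\<Union>n. {last p | p. is_path V E p \<and> hd p = r \<and> length p \<le> Suc n})"
    by blast
  moreover have "countable (\<Union>n. {last p | p. is_path V E p \<and> hd p = r \<and> length p \<le> Suc n})"
    using finite_ends_of_short_paths[OF assms] by (simp add: countable_finite)
  ultimately show ?thesis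
    by (rule countable_subset)
qed

lemma perfect_tree_infinite_antichain:
  assumes "perfect_tree V E r"
  obtains Q where "Q \<subseteq> V" "infinite Q"
    "\<And>u v. u \<in> Q \<Longrightarrow> v \<in> Q \<Longrightarrow> u \<noteq> v \<Longrightarrow> \<not> compatible V E r u v"
proof -
  have "\<forall>v. \<exists>a b. v \<in> V \<longrightarrow>
          extension V E r v a \<and> extension V E r v b \<and> \<not> compatible V E r a b"
    using assms unfolding perfect_tree_def by blast
  then obtain left right where split: "\<And>v. v \<in> V \<Longrightarrow>
      extension V E r v (left v) \<and> extension V E r v (right v) \<and>
      \<not> compatible V E r (left v) (right v)"
    unfolding choice_iff by blast
  have ext_V: "extension V E r u v \<Longrightarrow> v \<in> V" for u v
    unfolding extension_def by blast
  define spine where "spine k = (right ^^ k) r" for k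
  have spine_Suc: "spine (Suc k) = right (spine k)" for k
    by (simp add: spine_def)
  have spine_V: "spine k \<in> V" for k
  proof (induction k)
    case 0
    then show ?case using root by (simp add: spine_def)
  next
    case (Suc k)
    then show ?case using split ext_V unfolding spine_Suc by blast
  qed
  have spine_ext: "extension V E r (spine k) (spine l)" if "k \<le> l" for k l
    using that
  proof (induction l rule: dec_induct)
    case base
    then show ?case using extension_refl spine_V by blast
  next
    case (step l)
    then show ?case
      using extension_trans split[OF spine_V[of l]] unfolding spine_Suc by blast
  qed
  define q where "q k = left (spine k)" for k
  have q_V: "q k \<in> V" for k
    unfolding q_def using split[OF spine_V] ext_V by blast
  have incompatible: "\<not> compatible V E r (q k) (q l)" if "k < l" for k l
  proof -
    have "extension V E r (spine (Suc k)) (spine l)"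
      using spine_ext that by simp
    then have "extension V E r (right (spine k)) (q l)"
      using extension_trans split[OF spine_V[of l]] unfolding q_def spine_Suc by blast
    then show ?thesis
      using incompatible_extension split[OF spine_V[of k]] unfolding q_def by blast
  qed
  have incompatible': "\<not> compatible V E r (q k) (q l)" if "k \<noteq> l" for k l
    using incompatible[of k l] incompatible[of l k] that
    unfolding compatible_def by (cases "k < l") auto
  have "inj q"
  proof (rule injI)
    fix k l assume "q k = q l"
    then have "compatible V E r (q k) (q l)"
      using extension_refl[OF q_V] unfolding compatible_def by simp
    then show "k = l"
      using incompatible' by blast
  qed
  show ?thesis
  proof (rule that[of "range q"])
    show "range q \<subseteq> V" "infinite (range q)"
      using q_V range_inj_infinite[OF \<open>inj q\<close>] by auto
    show "\<not> compatible V E r u v" if "u \<in> range q" "v \<in> range q" "u \<noteq> v" for u v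
      using that incompatible' by (metis rangeE)
  qed
qed
end

lemma embed_into_clique_join:
  fixes a :: "nat \<Rightarrow> nat" and G :: "'v \<Rightarrow> 'v \<Rightarrow> bool"
  assumes "countable V" "Q \<subseteq> V" "infinite Q"
    and G: "\<And>u v. G u v \<Longrightarrow> u \<in> V \<and> v \<in> V \<and> u \<noteq> v \<and> (u \<notin> Q \<or> v \<notin> Q)"
    and "inj a" "infinite B" "range a \<inter> B = {}"
    and clique: "\<And>k l. k \<noteq> l \<Longrightarrow> c {a k, a l} = i"
    and join: "\<And>k x. x \<in> B \<Longrightarrow> c {a k, x} = i"
  obtains g where "inj_on g V" "g ` V \<subseteq> range a \<union> B" "B \<subseteq> g ` V"
    "\<And>u v. G u v \<Longrightarrow> c {g u, g v} = i"
proof -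
  define idx where "idx = to_nat_on (V - Q)"
  define g where "g v = (if v \<in> Q then from_nat_into B (to_nat_on Q v) else a (idx v))" for v
  have "countable Q"
    using assms(1,2) countable_subset by blast
  then have "bij_betw (from_nat_into B \<circ> to_nat_on Q) Q B"
    using \<open>infinite Q\<close> \<open>infinite B\<close>
    by (intro bij_betw_trans[OF to_nat_on_infinite bij_betw_from_nat_into]) auto
  moreover have "bij_betw g Q B \<longleftrightarrow> bij_betw (from_nat_into B \<circ> to_nat_on Q) Q B"
    by (intro bij_betw_cong) (simp add: g_def)
  ultimately have g_Q: "bij_betw g Q B"
    by simp
  have idx_inj: "inj_on idx (V - Q)"
    unfolding idx_def using assms(1) by (intro inj_on_to_nat_on) auto
  then have "inj_on (a \<circ> idx) (V - Q)"
    using \<open>inj a\<close> by (intro comp_inj_on) (auto intro: inj_on_subset)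
  then have g_out: "inj_on g (V - Q)"
    by (rule inj_on_cong[THEN iffD1, rotated]) (simp add: g_def)
  have g_out_range: "g ` (V - Q) \<subseteq> range a"
    by (auto simp: g_def)
  have "g ` Q = B"
    using g_Q by (simp add: bij_betw_def)
  have V_split: "V = Q \<union> (V - Q)"
    using \<open>Q \<subseteq> V\<close> by blast
  show ?thesis
  proof
    have "g ` Q \<inter> g ` (V - Q) = {}"
      using \<open>g ` Q = B\<close> g_out_range \<open>range a \<inter> B = {}\<close> by blast
    moreover have "Q - (V - Q) = Q" "(V - Q) - Q = V - Q"
      by auto
    ultimately have "inj_on g (Q \<union> (V - Q))"
      using g_Q g_out unfolding inj_on_Un bij_betw_def by simp
    then show "inj_on g V"
      using V_split by simp
    have "g ` V = B \<union> g ` (V - Q)"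
      using V_split \<open>g ` Q = B\<close> by (metis image_Un)
    then show "g ` V \<subseteq> range a \<union> B" "B \<subseteq> g ` V"
      using g_out_range by auto
    show "c {g u, g v} = i" if "G u v" for u v
    proof -
      have g_in: "g w \<in> B" if "w \<in> Q" for w
        using \<open>g ` Q = B\<close> that by blast
      have g_notin: "g w = a (idx w)" if "w \<notin> Q" for w
        using that by (simp add: g_def)
      consider "u \<in> Q" "v \<notin> Q" | "u \<notin> Q" "v \<in> Q" | "u \<notin> Q" "v \<notin> Q"
        using G[OF \<open>G u v\<close>] by blast
      then show ?thesis
      proof cases
        case 1
        then show ?thesis
          using join[OF g_in[of u], of "idx v"] g_notin[of v] by (simp add: insert_commute)
      next
        case 2
        then show ?thesis using join[OF g_in[of v]] g_notin[of u] by simp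
      next
        case 3
        then have "idx u \<noteq> idx v"
          using G[OF \<open>G u v\<close>] idx_inj by (meson DiffI inj_onD)
        then show ?thesis using clique g_notin 3 by simp
      qed
    qed
  qed
qed

theorem mainTheorem17:
  fixes f :: "nat \<Rightarrow> nat" and V :: "'a set" and E :: "'a \<Rightarrow> 'a \<Rightarrow> bool" and r :: 'a
  assumes "\<forall>n\<ge>1. f n \<ge> 1"
    and "(\<lambda>n. real (f n) / real n) \<longlonglongrightarrow> 0"
    and "is_tree V E" and "locally_finite V E" and "r \<in> V" and "perfect_tree V E r"
  shows "\<forall>c :: nat set \<Rightarrow> nat. finite (c ` KN_edges) \<longrightarrow>
           (\<exists>g col. inj_on g V \<and> g ` V \<subseteq> {1..} \<and>
              (\<forall>u v. compat_graph_edge V E r u v \<longrightarrow> c {g u, g v} = col) \<and>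
              g ` V \<notin> Z_ideal f)"
proof (intro allI impI)
  fix c :: "nat set \<Rightarrow> nat"
  assume fin: "finite (c ` KN_edges)"
  obtain i and a :: "nat \<Rightarrow> nat" and B where clique_join:
    "inj a" "range a \<subseteq> {1..}" "infinite B" "B \<subseteq> {1..}" "range a \<inter> B = {}"
    "\<And>k l. k \<noteq> l \<Longrightarrow> c {a k, a l} = i" "\<And>k x. x \<in> B \<Longrightarrow> c {a k, x} = i"
    and "B \<notin> Z_ideal f"
    by (rule exists_monochromatic_clique_join[OF fin assms(1,2)]) (rule that)
  interpret rooted_tree V E r
    using assms(3,5) by unfold_locales
  obtain Q where "Q \<subseteq> V" "infinite Q"
    and antichain: "\<And>u v. u \<in> Q \<Longrightarrow> v \<in> Q \<Longrightarrow> u \<noteq> v \<Longrightarrow> \<not> compatible V E r u v"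
    using perfect_tree_infinite_antichain[OF assms(6)] by blast
  have edge: "compat_graph_edge V E r u v \<Longrightarrow> u \<in> V \<and> v \<in> V \<and> u \<noteq> v \<and> (u \<notin> Q \<or> v \<notin> Q)"
    for u v
    using antichain unfolding compat_graph_edge_def by blast
  obtain g where "inj_on g V" "g ` V \<subseteq> range a \<union> B" "B \<subseteq> g ` V"
    and "\<And>u v. compat_graph_edge V E r u v \<Longrightarrow> c {g u, g v} = i"
    using embed_into_clique_join[where G = "compat_graph_edge V E r" and c = c,
          OF countable_vertices[OF assms(4)] \<open>Q \<subseteq> V\<close> \<open>infinite Q\<close> edge clique_join(1,3,5-7)]
    by blast
  moreover have "g ` V \<notin> Z_ideal f"
    using \<open>B \<subseteq> g ` V\<close> \<open>B \<notin> Z_ideal f\<close> Z_ideal_subset by blast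
  ultimately show "\<exists>g col. inj_on g V \<and> g ` V \<subseteq> {1..} \<and>
      (\<forall>u v. compat_graph_edge V E r u v \<longrightarrow> c {g u, g v} = col) \<and> g ` V \<notin> Z_ideal f"
    using clique_join(2,4) by blast
qed

end
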